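(* The PAFP problem with well-parenthesized forbidden pairs can be solved in $O(n^3)$ time, where $n=|V|$. That is: given a directed acyclic graph $G=(V,E)$ with $n$ vertices, a topological ordering $\prec$ of $V$, two vertices $s,t\in V$, and a set $F$ of forbidden pairs of vertices that is well-parenthesized with respect to $\prec$, one can decide in $O(n^3)$ time whether there exists a safe $s$--$t$ path in $G$.
   Context: PAFP (Path Avoiding Forbidden Pairs) problem: given a directed acyclic graph $G=(V,E)$, vertices $s,t$, and a set $F$ of unordered pairs of vertices (forbidden pairs), determine whether there is a directed path from $s$ to $t$ that is safe, i.e. contains at most one vertex of each forbidden pair. Fix a linear (topological) ordering $\prec$ of the vertices, and write each forbidden pair as $(u,v)$ with $u\prec v$. Two forbidden pairs $(u,v)$ and $(x,y)$ halve each other if $u\prec x\prec v\prec y$. The set $F$ is well-parenthesized (with respect to $\prec$) if no two forbidden pairs halve each other, i.e. the intervals spanned by forbidden pairs are pairwise nested or disjoint. *)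

theory Defs
  imports Main
begin

text \<open>Vertices are 0..n-1, numbered along the given topological ordering,
  so the linear order of vertices is the usual order on nat.\<close>

definition is_path :: "(nat \<times> nat) set \<Rightarrow> nat list \<Rightarrow> bool" where
  "is_path E p \<longleftrightarrow> p \<noteq> [] \<and> (\<forall>i. Suc i < length p \<longrightarrow> (p ! i, p ! Suc i) \<in> E)"

definition safe :: "nat set set \<Rightarrow> nat list \<Rightarrow> bool" where
  "safe F p \<longleftrightarrow> (\<forall>P\<in>F. \<not> P \<subseteq> set p)"

definition safe_path_exists ::
  "(nat \<times> nat) set \<Rightarrow> nat set set \<Rightarrow> nat \<Rightarrow> nat \<Rightarrow> bool" where
  "safe_path_exists E F s t \<longleftrightarrow>
     (\<exists>p. is_path E p \<and> hd p = s \<and> last p = t \<and> safe F p)"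

text \<open>(u,v) and (x,y) (with u<v, x<y) halve each other if u<x<v<y.\<close>
definition well_parenthesized :: "nat set set \<Rightarrow> bool" where
  "well_parenthesized F \<longleftrightarrow>
     \<not> (\<exists>u v x y. {u, v} \<in> F \<and> {x, y} \<in> F \<and> u < x \<and> x < v \<and> v < y)"

definition valid_instance ::
  "nat \<Rightarrow> (nat \<times> nat) set \<Rightarrow> nat set set \<Rightarrow> nat \<Rightarrow> nat \<Rightarrow> bool" where
  "valid_instance n E F s t \<longleftrightarrow>
     E \<subseteq> {0..<n} \<times> {0..<n} \<and>
     (\<forall>(i,j)\<in>E. i < j) \<and>
     (\<forall>P\<in>F. \<exists>u v. P = {u, v} \<and> u < v \<and> v < n) \<and>
     s < n \<and> t < n"

datatype instr =
    LoadConst nat nat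
  | Add nat nat nat
  | Sub nat nat nat        \<comment> \<open>reg r := reg a - reg b (truncated at 0)\<close>
  | Load nat nat
  | Store nat nat
  | JmpZ nat nat
  | Halt

record config =
  pc  :: nat
  reg :: "nat \<Rightarrow> nat"
  mem :: "nat \<Rightarrow> nat"

definition halted :: "instr list \<Rightarrow> config \<Rightarrow> bool" where
  "halted prog c \<longleftrightarrow> pc c \<ge> length prog \<or> prog ! pc c = Halt"

fun exec :: "instr \<Rightarrow> config \<Rightarrow> config" where
  "exec (LoadConst r k) c = c\<lparr>pc := Suc (pc c), reg := (reg c)(r := k)\<rparr>"
| "exec (Add r a b) c = c\<lparr>pc := Suc (pc c), reg := (reg c)(r := reg c a + reg c b)\<rparr>"
| "exec (Sub r a b) c = c\<lparr>pc := Suc (pc c), reg := (reg c)(r := reg c a - reg c b)\<rparr>"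
| "exec (Load r a) c = c\<lparr>pc := Suc (pc c), reg := (reg c)(r := mem c (reg c a))\<rparr>"
| "exec (Store a b) c = c\<lparr>pc := Suc (pc c), mem := (mem c)(reg c a := reg c b)\<rparr>"
| "exec (JmpZ r l) c = c\<lparr>pc := (if reg c r = 0 then l else Suc (pc c))\<rparr>"
| "exec Halt c = c"

definition step :: "instr list \<Rightarrow> config \<Rightarrow> config" where
  "step prog c = (if halted prog c then c else exec (prog ! pc c) c)"

fun run :: "instr list \<Rightarrow> nat \<Rightarrow> config \<Rightarrow> config" where
  "run prog 0 c = c"
| "run prog (Suc k) c = run prog k (step prog c)"

text \<open>Input encoding: mem 0 = n, mem 1 = s, mem 2 = t,
  mem (3 + i*n + j) = 1 iff (i,j) is an edge (i,j < n),
  mem (3 + n*n + i*n + j) = 1 iff {i,j} is a forbidden pair (i,j < n);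
  all other cells and all registers are 0; execution starts at pc 0.\<close>

definition input_mem ::
  "nat \<Rightarrow> (nat \<times> nat) set \<Rightarrow> nat set set \<Rightarrow> nat \<Rightarrow> nat \<Rightarrow> nat \<Rightarrow> nat" where
  "input_mem n E F s t a =
     (if a = 0 then n else if a = 1 then s else if a = 2 then t
      else if a < 3 + n * n then
        (let i = (a - 3) div n; j = (a - 3) mod n in if (i, j) \<in> E then 1 else 0)
      else if a < 3 + 2 * (n * n) then
        (let i = (a - 3 - n * n) div n; j = (a - 3 - n * n) mod n in
           if {i, j} \<in> F then 1 else 0)
      else 0)"

definition init_config ::
  "nat \<Rightarrow> (nat \<times> nat) set \<Rightarrow> nat set set \<Rightarrow> nat \<Rightarrow> nat \<Rightarrow> config" where
  "init_config n E F s t = \<lparr>pc = 0, reg = (\<lambda>_. 0), mem = input_mem n E F s t\<rparr>"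

end

(*
  Dynamic programming over the pairs a < b, with a decreasing and b increasing. Let v be the
  last partner of a in (a, b], i.e. the largest v \<le> b with {a, v} \<in> F. A safe a-b path
  avoids v, so it has an edge (x, y) with x < v < y -- or, if there is no such v, a first edge
  (a, y) -- and splits into a safe a-x path inside [a, v) and a safe y-b path. Conversely, two
  such paths always concatenate to a safe path: a forbidden pair {u, w} with a < u \<le> x and
  y \<le> w would halve {a, v}, and u = a is excluded by the maximality of v. Hence the existence
  of a safe a-b path is decided by a scan over y of the table of safe paths and of a table
  J(a, y), "some safe a-x path with x below the bound for y ends in the edge (x, y)", whose
  entries are scans over x themselves. Each of the n^2 entries of the two tables costs O(n)
  steps, which is verified for an explicit RAM program.
*)

theory Submission
  imports Defs
begin

section \<open>Structured programs for the RAM\<close>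

type_synonym state = "(nat \<Rightarrow> nat) \<times> (nat \<Rightarrow> nat)"

fun exec_instr :: "instr \<Rightarrow> state \<Rightarrow> state" where
  "exec_instr (LoadConst r k) (R, M) = (R(r := k), M)"
| "exec_instr (Add r a b) (R, M) = (R(r := R a + R b), M)"
| "exec_instr (Sub r a b) (R, M) = (R(r := R a - R b), M)"
| "exec_instr (Load r a) (R, M) = (R(r := M (R a)), M)"
| "exec_instr (Store a b) (R, M) = (R, M(R a := R b))"
| "exec_instr _ s = s"

fun exec_instrs :: "instr list \<Rightarrow> state \<Rightarrow> state" where
  "exec_instrs [] s = s"
| "exec_instrs (i # is) s = exec_instrs is (exec_instr i s)"

datatype com = Block "instr list" | Seq com com | Cond nat com com | While nat com

fun com_length :: "com \<Rightarrow> nat" where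
  "com_length (Block is) = length is"
| "com_length (Seq c1 c2) = com_length c1 + com_length c2"
| "com_length (Cond r c1 c2) = com_length c1 + com_length c2 + 2"
| "com_length (While r c) = com_length c + 2"

text \<open>Register 50 is never written by a well-formed command, so it stays 0: a jump on it
  is unconditional, and adding it to a register is a move.\<close>

abbreviation (input) r_zero :: nat where "r_zero \<equiv> 50"

fun compile :: "nat \<Rightarrow> com \<Rightarrow> instr list" where
  "compile p (Block is) = is"
| "compile p (Seq c1 c2) = compile p c1 @ compile (p + com_length c1) c2"
| "compile p (Cond r c1 c2) =
     [JmpZ r (p + 2 + com_length c1)] @ compile (p + 1) c1 @
     [JmpZ r_zero (p + 2 + com_length c1 + com_length c2)] @ compile (p + 2 + com_length c1) c2"
| "compile p (While r c) = [JmpZ r (p + 2 + com_length c)] @ compile (p + 1) c @ [JmpZ r_zero p]"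

lemma length_compile [simp]: "length (compile p c) = com_length c"
  by (induction c arbitrary: p) auto

fun straight_instr :: "instr \<Rightarrow> bool" where
  "straight_instr (LoadConst r _) = (r \<noteq> r_zero)"
| "straight_instr (Add r _ _) = (r \<noteq> r_zero)"
| "straight_instr (Sub r _ _) = (r \<noteq> r_zero)"
| "straight_instr (Load r _) = (r \<noteq> r_zero)"
| "straight_instr (Store _ _) = True"
| "straight_instr _ = False"

fun wf_com :: "com \<Rightarrow> bool" where
  "wf_com (Block is) = (\<forall>i\<in>set is. straight_instr i)"
| "wf_com (Seq c1 c2) = (wf_com c1 \<and> wf_com c2)"
| "wf_com (Cond r c1 c2) = (wf_com c1 \<and> wf_com c2)"
| "wf_com (While r c) = wf_com c"

text \<open>The time \<open>t\<close> in \<open>big_step c s t s'\<close> is the number of machine steps of \<open>compile p c\<close>,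
  jumps included.\<close>

inductive big_step :: "com \<Rightarrow> state \<Rightarrow> nat \<Rightarrow> state \<Rightarrow> bool" where
  Block: "big_step (Block is) s (length is) (exec_instrs is s)"
| Seq: "big_step c1 s t1 s1 \<Longrightarrow> big_step c2 s1 t2 s2 \<Longrightarrow> big_step (Seq c1 c2) s (t1 + t2) s2"
| CondTrue: "fst s r \<noteq> 0 \<Longrightarrow> big_step c1 s t s' \<Longrightarrow> big_step (Cond r c1 c2) s (t + 2) s'"
| CondFalse: "fst s r = 0 \<Longrightarrow> big_step c2 s t s' \<Longrightarrow> big_step (Cond r c1 c2) s (t + 1) s'"
| WhileFalse: "fst s r = 0 \<Longrightarrow> big_step (While r c) s 1 s"
| WhileTrue: "fst s r \<noteq> 0 \<Longrightarrow> big_step c s t1 s1 \<Longrightarrow> big_step (While r c) s1 t2 s2 \<Longrightarrow>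
    big_step (While r c) s (t1 + 2 + t2) s2"

lemma exec_instrs_zero:
  "\<forall>i\<in>set is. straight_instr i \<Longrightarrow> fst (exec_instrs is s) r_zero = fst s r_zero"
proof (induction "is" arbitrary: s)
  case (Cons i "is")
  then show ?case by (cases s; cases i) auto
qed simp

lemma big_step_zero: "big_step c s t s' \<Longrightarrow> wf_com c \<Longrightarrow> fst s' r_zero = fst s r_zero"
  by (induction rule: big_step.induct) (auto simp: exec_instrs_zero)

definition code_at :: "instr list \<Rightarrow> nat \<Rightarrow> instr list \<Rightarrow> bool" where
  "code_at prog p is \<longleftrightarrow> take (length is) (drop p prog) = is"

lemma take_add_eq_append:
  "take (length xs + length ys) zs = xs @ ys \<longleftrightarrow>
    take (length xs) zs = xs \<and> take (length ys) (drop (length xs) zs) = ys"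
proof (cases "length xs \<le> length zs")
  case True
  then show ?thesis by (simp add: take_add append_eq_append_conv)
next
  case False
  then show ?thesis by (auto dest: arg_cong[of _ _ length])
qed

lemma take_Suc_drop_eq_Cons:
  "take (Suc (length xs)) (drop p zs) = x # xs \<longleftrightarrow>
    p < length zs \<and> zs ! p = x \<and> take (length xs) (drop (Suc p) zs) = xs"
proof (cases "p < length zs")
  case True
  then show ?thesis by (simp add: Cons_nth_drop_Suc[symmetric])
qed simp
lemma code_at_append [simp]:
  "code_at prog p (is @ js) \<longleftrightarrow> code_at prog p is \<and> code_at prog (p + length is) js"
  by (simp add: code_at_def take_add_eq_append add.commute)

lemma code_at_Cons [simp]:
  "code_at prog p (i # is) \<longleftrightarrow> p < length prog \<and> prog ! p = i \<and> code_at prog (Suc p) is"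
  by (simp add: code_at_def take_Suc_drop_eq_Cons)

definition config_of :: "nat \<Rightarrow> state \<Rightarrow> config" where
  "config_of p s = \<lparr>pc = p, reg = fst s, mem = snd s\<rparr>"

lemma run_add: "run prog (a + b) c = run prog b (run prog a c)"
  by (induction a arbitrary: c) auto

lemma step_straight_instr:
  assumes "p < length prog" "prog ! p = i" "straight_instr i"
  shows "step prog (config_of p s) = config_of (Suc p) (exec_instr i s)"
proof -
  have "\<not> halted prog (config_of p s)"
    using assms by (cases i) (auto simp: halted_def config_of_def)
  then show ?thesis using assms by (cases s; cases i) (auto simp: step_def config_of_def)
qed

lemma step_JmpZ:
  assumes "p < length prog" "prog ! p = JmpZ r l"
  shows "step prog (config_of p s) = config_of (if fst s r = 0 then l else Suc p) s"
proof -
  have "\<not> halted prog (config_of p s)" using assms by (auto simp: halted_def config_of_def)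
  then show ?thesis using assms by (cases s) (auto simp: step_def config_of_def)
qed

lemma run_straight_code:
  "code_at prog p is \<Longrightarrow> \<forall>i\<in>set is. straight_instr i \<Longrightarrow>
    run prog (length is) (config_of p s) = config_of (p + length is) (exec_instrs is s)"
  by (induction "is" arbitrary: p s) (auto simp: step_straight_instr)

theorem run_compile:
  "big_step c s t s' \<Longrightarrow> wf_com c \<Longrightarrow> fst s r_zero = 0 \<Longrightarrow> code_at prog p (compile p c) \<Longrightarrow>
    run prog t (config_of p s) = config_of (p + com_length c) s'"
proof (induction arbitrary: p rule: big_step.induct)
  case (Block "is" s)
  then show ?case using run_straight_code by auto
next
  case (Seq c1 s t1 s1 c2 t2 s2)
  have "fst s1 r_zero = 0" using big_step_zero Seq by auto
  then show ?case using Seq by (auto simp: run_add add.assoc)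
next
  case (CondTrue s r c1 t s' c2)
  have "fst s' r_zero = 0" using big_step_zero CondTrue by auto
  have "run prog (1 + t + 1) (config_of p s) = run prog 1 (run prog t (run prog 1 (config_of p s)))"
    by (simp only: run_add)
  also have "run prog 1 (config_of p s) = config_of (Suc p) s"
    using CondTrue by (auto simp: step_JmpZ)
  also have "run prog t (config_of (Suc p) s) = config_of (Suc p + com_length c1) s'"
    using CondTrue by auto
  also have "run prog 1 \<dots> = config_of (p + com_length (Cond r c1 c2)) s'"
    using CondTrue \<open>fst s' r_zero = 0\<close> by (auto simp: step_JmpZ add.assoc)
  finally show ?case by (simp add: add.commute)
next
  case (CondFalse s r c2 t s' c1)
  have "run prog (1 + t) (config_of p s) = run prog t (run prog 1 (config_of p s))"
    by (simp only: run_add)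
  also have "run prog 1 (config_of p s) = config_of (p + 2 + com_length c1) s"
    using CondFalse by (auto simp: step_JmpZ)
  also have "run prog t \<dots> = config_of (p + com_length (Cond r c1 c2)) s'"
    using CondFalse by (auto simp: add_ac)
  finally show ?case by (simp add: add.commute)
next
  case (WhileFalse s r c)
  then show ?case by (auto simp: step_JmpZ)
next
  case (WhileTrue s r c t1 s1 t2 s2)
  have "fst s1 r_zero = 0" using big_step_zero WhileTrue by auto
  have "run prog (1 + t1 + 1 + t2) (config_of p s) =
      run prog t2 (run prog 1 (run prog t1 (run prog 1 (config_of p s))))"
    by (simp only: run_add)
  also have "run prog 1 (config_of p s) = config_of (Suc p) s"
    using WhileTrue by (auto simp: step_JmpZ)
  also have "run prog t1 (config_of (Suc p) s) = config_of (Suc p + com_length c) s1"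
    using WhileTrue by auto
  also have "run prog 1 \<dots> = config_of p s1"
    using WhileTrue \<open>fst s1 r_zero = 0\<close> by (auto simp: step_JmpZ)
  also have "run prog t2 \<dots> = config_of (p + com_length (While r c)) s2"
    using WhileTrue \<open>fst s1 r_zero = 0\<close> by auto
  finally show ?case by (simp add: add_ac)
qed

section \<open>Time-bounded total correctness\<close>

definition terminates :: "state \<Rightarrow> com \<Rightarrow> (state \<Rightarrow> bool) \<Rightarrow> nat \<Rightarrow> bool" where
  "terminates s c Q T \<longleftrightarrow> (\<exists>t s'. big_step c s t s' \<and> Q s' \<and> t \<le> T)"

lemma terminates_Block: "Q (exec_instrs is s) \<Longrightarrow> length is \<le> T \<Longrightarrow> terminates s (Block is) Q T"
  unfolding terminates_def using big_step.Block by blast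

lemma terminates_Seq:
  "terminates s c1 Q1 T1 \<Longrightarrow> (\<And>s1. Q1 s1 \<Longrightarrow> terminates s1 c2 Q2 T2) \<Longrightarrow>
    terminates s (Seq c1 c2) Q2 (T1 + T2)"
  unfolding terminates_def by (meson big_step.Seq add_mono)

lemma terminates_Seq_to:
  "terminates s c1 (\<lambda>s'. s' = s1) T1 \<Longrightarrow> terminates s1 c2 Q T2 \<Longrightarrow>
    terminates s (Seq c1 c2) Q (T1 + T2)"
  using terminates_Seq[of s c1 "\<lambda>s'. s' = s1" T1 c2 Q T2] by auto

lemma terminates_Cond:
  assumes "fst s r \<noteq> 0 \<Longrightarrow> terminates s c1 Q T" "fst s r = 0 \<Longrightarrow> terminates s c2 Q T"
  shows "terminates s (Cond r c1 c2) Q (T + 2)"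
proof (cases "fst s r = 0")
  case True
  with assms(2) obtain t s' where "big_step c2 s t s'" "Q s'" "t \<le> T"
    unfolding terminates_def by blast
  with True show ?thesis unfolding terminates_def by (fastforce intro: big_step.CondFalse)
next
  case False
  with assms(1) obtain t s' where "big_step c1 s t s'" "Q s'" "t \<le> T"
    unfolding terminates_def by blast
  with False show ?thesis unfolding terminates_def by (fastforce intro: big_step.CondTrue)
qed

lemma terminates_mono:
  "terminates s c Q T \<Longrightarrow> (\<And>s. Q s \<Longrightarrow> Q' s) \<Longrightarrow> T \<le> T' \<Longrightarrow> terminates s c Q' T'"
  unfolding terminates_def by (meson order_trans)

lemma terminates_While_from:
  assumes step: "\<And>k s. I k s \<Longrightarrow> k < N \<Longrightarrow> fst s r \<noteq> 0 \<and> terminates s c (I (Suc k)) T"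
    and exit: "\<And>s. I N s \<Longrightarrow> fst s r = 0"
  shows "I k s \<Longrightarrow> k \<le> N \<Longrightarrow> terminates s (While r c) (I N) ((N - k) * (T + 2) + 1)"
proof (induction "N - k" arbitrary: k s)
  case 0
  then have "k = N" by simp
  with 0 exit show ?case
    unfolding terminates_def by (fastforce intro: big_step.WhileFalse)
next
  case (Suc m)
  then have "k < N" by simp
  with step Suc.prems obtain t s' where
    first: "fst s r \<noteq> 0" "big_step c s t s'" "I (Suc k) s'" "t \<le> T"
    unfolding terminates_def by blast
  have "m = N - Suc k" using Suc.hyps(2) by simp
  from Suc.hyps(1)[OF this first(3)] \<open>k < N\<close>
  have "terminates s' (While r c) (I N) ((N - Suc k) * (T + 2) + 1)" by (simp add: Suc_le_eq)
  then obtain t' s'' where rest: "big_step (While r c) s' t' s''" "I N s''"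
    "t' \<le> (N - Suc k) * (T + 2) + 1"
    unfolding terminates_def by blast
  have "big_step (While r c) s (t + 2 + t') s''"
    using first rest by (blast intro: big_step.WhileTrue)
  moreover have "N - k = Suc (N - Suc k)" using \<open>k < N\<close> by simp
  ultimately show ?case
    unfolding terminates_def using first(4) rest(2,3)
    by (intro exI[of _ "t + 2 + t'"] exI[of _ s'']) auto
qed

lemma terminates_While:
  assumes "\<And>k s. I k s \<Longrightarrow> k < N \<Longrightarrow> fst s r \<noteq> 0 \<and> terminates s c (I (Suc k)) T"
    and "\<And>s. I N s \<Longrightarrow> fst s r = 0" and "I 0 s"
  shows "terminates s (While r c) (I N) (N * (T + 2) + 1)"
proof -
  have "terminates s (While r c) (I N) ((N - 0) * (T + 2) + 1)"
    by (rule terminates_While_from) (use assms in auto)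
  then show ?thesis by simp
qed

section \<open>The recurrence for safe paths\<close>

lemma is_path_singleton [simp]: "is_path E [x]"
  by (simp add: is_path_def)

lemma is_path_Cons_Cons [simp]: "is_path E (x # y # ys) \<longleftrightarrow> (x, y) \<in> E \<and> is_path E (y # ys)"
  unfolding is_path_def by (auto simp: less_Suc_eq_0_disj)

lemma is_path_append:
  "p \<noteq> [] \<Longrightarrow> q \<noteq> [] \<Longrightarrow> is_path E (p @ q) \<longleftrightarrow> is_path E p \<and> is_path E q \<and> (last p, hd q) \<in> E"
proof (induction p rule: induct_list012)
  case (2 x)
  then show ?case by (cases q) auto
qed simp_all

lemma safe_subset: "safe F p \<Longrightarrow> set q \<subseteq> set p \<Longrightarrow> safe F q"
  unfolding safe_def by blast

lemma split_list_around:
  fixes v :: nat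
  assumes "p \<noteq> []" "hd p < v" "v < last p" "v \<notin> set p"
  shows "\<exists>p1 p2. p = p1 @ p2 \<and> p1 \<noteq> [] \<and> p2 \<noteq> [] \<and> last p1 < v \<and> v < hd p2"
  using assms
proof (induction p)
  case (Cons x q)
  then have "q \<noteq> []" by auto
  show ?case
  proof (cases "v < hd q")
    case True
    with Cons.prems \<open>q \<noteq> []\<close> show ?thesis by (intro exI[of _ "[x]"] exI[of _ q]) auto
  next
    case False
    with Cons.prems \<open>q \<noteq> []\<close> have "hd q < v"
      by (metis hd_in_set linorder_neqE_nat list.set_intros(2))
    with Cons \<open>q \<noteq> []\<close> obtain p1 p2
      where "q = p1 @ p2" "p1 \<noteq> []" "p2 \<noteq> []" "last p1 < v" "v < hd p2"
      by auto
    then show ?thesis by (intro exI[of _ "x # p1"] exI[of _ p2]) auto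
  qed
qed simp

text \<open>\<open>last_partner F a b\<close> encodes the largest \<open>v \<le> b\<close> with \<open>a < v\<close> and \<open>{a, v} \<in> F\<close>
  as \<open>Suc v\<close>, and its absence as \<open>0\<close>.\<close>

fun last_partner :: "nat set set \<Rightarrow> nat \<Rightarrow> nat \<Rightarrow> nat" where
  "last_partner F a 0 = 0"
| "last_partner F a (Suc b) =
    (if a < Suc b \<and> {a, Suc b} \<in> F then Suc (Suc b) else last_partner F a b)"

lemma last_partner_eq_0: "last_partner F a b = 0 \<Longrightarrow> a < u \<Longrightarrow> u \<le> b \<Longrightarrow> {a, u} \<notin> F"
  by (induction b) (auto simp: le_Suc_eq split: if_splits)

lemma last_partner_eq_Suc:
  "last_partner F a b = Suc v \<Longrightarrow>
    a < v \<and> v \<le> b \<and> {a, v} \<in> F \<and> (\<forall>u. v < u \<and> u \<le> b \<longrightarrow> {a, u} \<notin> F)"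
  by (induction b) (auto simp: le_Suc_eq split: if_splits)

lemma last_partner_eq_0_mono: "last_partner F a b = 0 \<Longrightarrow> b' \<le> b \<Longrightarrow> last_partner F a b' = 0"
  by (induction b) (auto simp: le_Suc_eq split: if_splits)

lemma last_partner_eq_Suc_mono:
  "last_partner F a b = Suc v \<Longrightarrow> v \<le> b' \<Longrightarrow> b' \<le> b \<Longrightarrow> last_partner F a b' = Suc v"
  by (induction b) (auto simp: le_Suc_eq split: if_splits)

lemma last_partner_le: "b \<le> a \<Longrightarrow> last_partner F a b = 0"
  by (induction b) auto

lemma last_partner_pred:
  "0 < b \<Longrightarrow> last_partner F a b = (if a < b \<and> {a, b} \<in> F then Suc b else last_partner F a (b - 1))"
  by (cases b) auto

text \<open>A safe path from \<open>a\<close> to \<open>b\<close> is cut at its first edge \<open>(x, y)\<close> if \<open>a\<close> has no partner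
  in \<open>(a, b]\<close>, and otherwise at the edge jumping over the last such partner \<open>v\<close>; in both
  cases \<open>x < jump_source_bound F a (y - 1)\<close> and \<open>jump_target_bound F a b \<le> y\<close>.\<close>

definition jump_source_bound :: "nat set set \<Rightarrow> nat \<Rightarrow> nat \<Rightarrow> nat" where
  "jump_source_bound F a b = (if last_partner F a b = 0 then a + 1 else last_partner F a b - 1)"

definition jump_target_bound :: "nat set set \<Rightarrow> nat \<Rightarrow> nat \<Rightarrow> nat" where
  "jump_target_bound F a b = (if last_partner F a b = 0 then a + 1 else last_partner F a b)"

definition jump_into :: "(nat \<times> nat) set \<Rightarrow> nat set set \<Rightarrow> nat \<Rightarrow> nat \<Rightarrow> bool" where
  "jump_into E F a y \<longleftrightarrow>
    (\<exists>x. a \<le> x \<and> x < jump_source_bound F a (y - 1) \<and> safe_path_exists E F a x \<and> (x, y) \<in> E)"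

lemma jump_source_bound_bounds:
  "a < b \<Longrightarrow> a < jump_source_bound F a (b - 1) \<and> jump_source_bound F a (b - 1) \<le> b"
  using last_partner_eq_Suc[of F a "b - 1"]
  by (cases "last_partner F a (b - 1)") (auto simp: jump_source_bound_def)

lemma jump_target_bound_bounds:
  "a < b \<Longrightarrow> a < jump_target_bound F a b \<and> jump_target_bound F a b \<le> Suc b"
  using last_partner_eq_Suc[of F a b]
  by (cases "last_partner F a b") (auto simp: jump_target_bound_def)

locale pafp_graph =
  fixes E :: "(nat \<times> nat) set" and F :: "nat set set"
  assumes edge_increasing: "(i, j) \<in> E \<Longrightarrow> i < j"
    and forbidden_pair: "P \<in> F \<Longrightarrow> \<exists>u v. P = {u, v} \<and> u < v"
    and well_par: "well_parenthesized F"
begin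

lemma path_bounds: "is_path E p \<Longrightarrow> w \<in> set p \<Longrightarrow> hd p \<le> w \<and> w \<le> last p"
proof (induction p arbitrary: w rule: induct_list012)
  case (3 x y zs)
  have "x < y" using "3.prems"(1) by (auto dest: edge_increasing)
  have IH: "y \<le> u \<and> u \<le> last (y # zs)" if "u \<in> set (y # zs)" for u
    using "3.IH"(2) "3.prems"(1) that by simp
  show ?case using IH[of y] IH[of w] \<open>x < y\<close> "3.prems"(2) by (cases "w = x") auto
qed auto

lemma safe_path_exists_refl: "safe_path_exists E F a a"
  unfolding safe_path_exists_def safe_def
  by (rule exI[of _ "[a]"]) (fastforce dest: forbidden_pair)

lemma safe_path_exists_le: "safe_path_exists E F a b \<Longrightarrow> a \<le> b"
  unfolding safe_path_exists_def using path_bounds by (metis hd_in_set is_path_def)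

lemma safe_path_exists_subpath:
  "is_path E q \<Longrightarrow> safe F p \<Longrightarrow> set q \<subseteq> set p \<Longrightarrow> safe_path_exists E F (hd q) (last q)"
  unfolding safe_path_exists_def using safe_subset by blast

lemma safe_path_split_first_edge:
  assumes "last_partner F a b = 0" "a < b"
    and p: "is_path E p" "hd p = a" "last p = b" "safe F p"
  shows "\<exists>y. jump_target_bound F a b \<le> y \<and> y \<le> b \<and> jump_into E F a y \<and> safe_path_exists E F y b"
proof -
  have "p \<noteq> []" using p(1) is_path_def by auto
  then obtain q where q: "p = a # q" using p(2) by (cases p) auto
  have "q \<noteq> []" using q p(3) assms(2) by auto
  have edge: "(a, hd q) \<in> E" and "is_path E q" using p(1) q \<open>q \<noteq> []\<close> by (cases q; simp)+
  have "hd q \<le> b" using path_bounds[OF p(1)] p(3) q \<open>q \<noteq> []\<close> by auto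
  then have "jump_source_bound F a (hd q - 1) = a + 1"
    using last_partner_eq_0_mono[OF assms(1)] by (simp add: jump_source_bound_def)
  then have "jump_into E F a (hd q)"
    unfolding jump_into_def using edge safe_path_exists_refl by auto
  moreover have "safe_path_exists E F (hd q) b"
    using safe_path_exists_subpath[OF \<open>is_path E q\<close> p(4)] p(3) \<open>q \<noteq> []\<close> unfolding q by auto
  moreover have "jump_target_bound F a b \<le> hd q"
    unfolding jump_target_bound_def using assms(1) edge_increasing[OF edge] by auto
  ultimately show ?thesis using \<open>hd q \<le> b\<close> by blast
qed

lemma safe_path_split_at_partner:
  assumes partner_v: "last_partner F a b = Suc v"
    and p: "is_path E p" "hd p = a" "last p = b" "safe F p"
  shows "\<exists>y. jump_target_bound F a b \<le> y \<and> y \<le> b \<and> jump_into E F a y \<and> safe_path_exists E F y b"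
proof -
  note partner = last_partner_eq_Suc[OF partner_v]
  have "p \<noteq> []" using p(1) is_path_def by auto
  have in_range: "a \<le> x \<and> x \<le> b" if "x \<in> set p" for x using path_bounds p that by auto
  have ends: "a \<in> set p" "b \<in> set p" using p \<open>p \<noteq> []\<close> by auto
  have "v \<notin> set p"
  proof
    assume "v \<in> set p"
    with ends have "{a, v} \<subseteq> set p" by simp
    with p(4) partner show False unfolding safe_def by blast
  qed
  then have "v < b" using partner ends by (metis le_neq_implies_less)
  with split_list_around[of p v] p \<open>p \<noteq> []\<close> partner \<open>v \<notin> set p\<close>
  obtain p1 p2 where split: "p = p1 @ p2" "p1 \<noteq> []" "p2 \<noteq> []" "last p1 < v" "v < hd p2"
    by auto
  have paths: "is_path E p1" "is_path E p2" "(last p1, hd p2) \<in> E"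
    using is_path_append[of p1 p2 E] split p by auto
  have "hd p2 \<le> b" "a \<le> last p1" using in_range split by auto
  have "last_partner F a (hd p2 - 1) = Suc v"
    using last_partner_eq_Suc_mono[OF partner_v, of "hd p2 - 1"] split \<open>hd p2 \<le> b\<close> by auto
  then have "jump_source_bound F a (hd p2 - 1) = v" unfolding jump_source_bound_def by auto
  moreover have "safe_path_exists E F a (last p1)"
    using safe_path_exists_subpath[OF paths(1) p(4)] split p by auto
  ultimately have "jump_into E F a (hd p2)"
    unfolding jump_into_def using split paths \<open>a \<le> last p1\<close> by blast
  moreover have "safe_path_exists E F (hd p2) b"
    using safe_path_exists_subpath[OF paths(2) p(4)] split p by auto
  moreover have "jump_target_bound F a b \<le> hd p2"
    unfolding jump_target_bound_def using partner_v split by auto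
  ultimately show ?thesis using \<open>hd p2 \<le> b\<close> by blast
qed

lemma safe_path_split:
  assumes "a < b" "safe_path_exists E F a b"
  shows "\<exists>y. jump_target_bound F a b \<le> y \<and> y \<le> b \<and> jump_into E F a y \<and> safe_path_exists E F y b"
proof -
  from assms(2) obtain p where "is_path E p" "hd p = a" "last p = b" "safe F p"
    unfolding safe_path_exists_def by auto
  then show ?thesis
    using safe_path_split_first_edge[OF _ assms(1)] safe_path_split_at_partner
    by (cases "last_partner F a b") blast+
qed

text \<open>This is where well-parenthesization is used: a pair straddling the jump would
  halve the pair \<open>{a, v}\<close> of the last partner \<open>v\<close> of \<open>a\<close>.\<close>

lemma no_pair_across_jump:
  assumes "jump_target_bound F a b \<le> y" "y \<le> b" "x < jump_source_bound F a (y - 1)"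
    and "a \<le> u" "u \<le> x" "y \<le> w" "w \<le> b"
  shows "{u, w} \<notin> F"
proof (cases "last_partner F a b")
  case 0
  then have "last_partner F a (y - 1) = 0" using last_partner_eq_0_mono assms(2) by auto
  then have "u = a" using assms by (auto simp: jump_source_bound_def)
  moreover have "a < y" using assms(1) 0 by (auto simp: jump_target_bound_def)
  ultimately show ?thesis using last_partner_eq_0[OF 0] assms by auto
next
  case (Suc v)
  note partner = last_partner_eq_Suc[OF Suc]
  have "v < y" using assms(1) Suc by (auto simp: jump_target_bound_def)
  then have "last_partner F a (y - 1) = Suc v"
    using last_partner_eq_Suc_mono[OF Suc, of "y - 1"] assms(2) by auto
  then have "u < v" using assms(3,5) by (auto simp: jump_source_bound_def)
  show ?thesis
  proof (cases "u = a")
    case True then show ?thesis using partner \<open>v < y\<close> assms(6,7) by auto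
  next
    case False
    with assms(4) have "a < u" by simp
    moreover have "v < w" using \<open>v < y\<close> assms(6) by simp
    ultimately show ?thesis
      using well_par partner \<open>u < v\<close> unfolding well_parenthesized_def by blast
  qed
qed

lemma safe_path_join:
  assumes y: "jump_target_bound F a b \<le> y" "y \<le> b" "jump_into E F a y" "safe_path_exists E F y b"
  shows "safe_path_exists E F a b"
proof -
  from y obtain x where x: "a \<le> x" "x < jump_source_bound F a (y - 1)"
    "safe_path_exists E F a x" "(x, y) \<in> E" unfolding jump_into_def by auto
  obtain p1 where p1: "is_path E p1" "hd p1 = a" "last p1 = x" "safe F p1"
    using x unfolding safe_path_exists_def by auto
  obtain p2 where p2: "is_path E p2" "hd p2 = y" "last p2 = b" "safe F p2"
    using y unfolding safe_path_exists_def by auto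
  have ne: "p1 \<noteq> []" "p2 \<noteq> []" using p1 p2 is_path_def by auto
  have across: "{u, w} \<notin> F" if "u \<in> set p1" "w \<in> set p2" for u w
    using no_pair_across_jump[OF y(1,2) x(2)] path_bounds p1 p2 that by auto
  have "safe F (p1 @ p2)"
    unfolding safe_def
  proof
    fix P assume "P \<in> F"
    then obtain u w where P: "P = {u, w}" by (blast dest: forbidden_pair)
    have "\<not> P \<subseteq> set p1" "\<not> P \<subseteq> set p2" using p1 p2 \<open>P \<in> F\<close> unfolding safe_def by auto
    then show "\<not> P \<subseteq> set (p1 @ p2)"
      using across[of u w] across[of w u] \<open>P \<in> F\<close> unfolding P by (auto simp: insert_commute)
  qed
  moreover have "is_path E (p1 @ p2)" using is_path_append[of p1 p2 E] ne p1 p2 x by auto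
  ultimately show ?thesis
    unfolding safe_path_exists_def using ne p1 p2 by (intro exI[of _ "p1 @ p2"]) auto
qed

theorem safe_path_exists_iff_jump:
  "a < b \<Longrightarrow> safe_path_exists E F a b \<longleftrightarrow>
    (\<exists>y. jump_target_bound F a b \<le> y \<and> y \<le> b \<and> jump_into E F a y \<and> safe_path_exists E F y b)"
  using safe_path_split safe_path_join by blast

end

lemma cell_index_less:
  fixes i j n :: nat
  assumes "i < n" "j < n"
  shows "i * n + j < n * n"
proof -
  have "i * n + j < Suc i * n" using assms by simp
  also have "\<dots> \<le> n * n" using assms by (intro mult_le_mono1) simp
  finally show ?thesis .
qed

lemma cell_index_eq_iff:
  fixes i j i' j' n :: nat
  assumes "j < n" "j' < n"
  shows "i * n + j = i' * n + j' \<longleftrightarrow> i = i' \<and> j = j'"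
proof
  assume "i * n + j = i' * n + j'"
  then have "(i * n + j) div n = (i' * n + j') div n" "(i * n + j) mod n = (i' * n + j') mod n"
    by simp_all
  with assms show "i = i' \<and> j = j'" by simp
qed simp

lemma input_mem_edge:
  fixes i j n :: nat
  assumes "i < n" "j < n"
  shows "input_mem n E F s t (3 + i * n + j) = (if (i, j) \<in> E then 1 else 0)"
proof -
  have "i * n + j < n * n" using cell_index_less assms by auto
  moreover have "(i * n + j) div n = i" "(i * n + j) mod n = j" using assms by auto
  ultimately show ?thesis unfolding input_mem_def Let_def by simp
qed

lemma input_mem_forbidden:
  fixes i j n :: nat
  assumes "i < n" "j < n"
  shows "input_mem n E F s t (3 + n * n + i * n + j) = (if {i, j} \<in> F then 1 else 0)"
proof -
  have "i * n + j < n * n" using cell_index_less assms by auto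
  moreover have "(i * n + j) div n = i" "(i * n + j) mod n = j" using assms by auto
  ultimately show ?thesis unfolding input_mem_def Let_def by simp
qed

lemma input_mem_beyond: "3 + 2 * (n * n) \<le> (x :: nat) \<Longrightarrow> input_mem n E F s t x = 0"
  unfolding input_mem_def by simp

locale pafp_instance =
  fixes n :: nat and E :: "(nat \<times> nat) set" and F :: "nat set set" and s t :: nat
  assumes valid: "valid_instance n E F s t" and well_parenthesized: "well_parenthesized F"
begin

sublocale pafp_graph E F
  using valid well_parenthesized unfolding valid_instance_def by unfold_locales (auto, blast)

text \<open>Behind the input, the program keeps the table of \<open>jump_into\<close> at \<open>3 + 2 n\<^sup>2\<close> and that
  of \<open>safe_path_exists\<close> at \<open>3 + 3 n\<^sup>2\<close>, both as \<open>n \<times> n\<close> matrices in row-major order. Rows are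
  computed from \<open>n - 1\<close> down to \<open>0\<close>, each by increasing column; \<open>tables_filled a bs bj M\<close> says
  that the rows after \<open>a\<close> are complete, that row \<open>a\<close> of the two tables is complete left of
  column \<open>bs\<close> resp. \<open>bj\<close>, and that all other entries are still 0.\<close>

definition S_table :: "nat \<Rightarrow> nat \<Rightarrow> nat \<Rightarrow> nat \<Rightarrow> nat" where
  "S_table a0 b0 i j =
    (if (a0 < i \<or> (i = a0 \<and> j < b0)) \<and> safe_path_exists E F i j then 1 else 0)"

definition J_table :: "nat \<Rightarrow> nat \<Rightarrow> nat \<Rightarrow> nat \<Rightarrow> nat" where
  "J_table a0 b0 i y =
    (if (a0 < i \<or> (i = a0 \<and> y < b0)) \<and> i < y \<and> jump_into E F i y then 1 else 0)"

definition tables_filled :: "nat \<Rightarrow> nat \<Rightarrow> nat \<Rightarrow> (nat \<Rightarrow> nat) \<Rightarrow> bool" where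
  "tables_filled a0 bs bj M \<longleftrightarrow> (\<forall>x < 3 + 2 * (n * n). M x = input_mem n E F s t x) \<and>
     (\<forall>i<n. \<forall>j<n. M (3 + 3 * (n * n) + i * n + j) = S_table a0 bs i j) \<and>
     (\<forall>i<n. \<forall>j<n. M (3 + 2 * (n * n) + i * n + j) = J_table a0 bj i j)"

lemma tables_filled_edge:
  "tables_filled a0 bs bj M \<Longrightarrow> i < n \<Longrightarrow> j < n \<Longrightarrow> A = 3 + i * n + j \<Longrightarrow>
    M A = (if (i, j) \<in> E then 1 else 0)"
  unfolding tables_filled_def
  using cell_index_less[where i = i and j = j and n = n]
    input_mem_edge[where i = i and j = j and n = n]
  by auto

lemma tables_filled_forbidden:
  "tables_filled a0 bs bj M \<Longrightarrow> i < n \<Longrightarrow> j < n \<Longrightarrow> A = 3 + n * n + i * n + j \<Longrightarrow>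
    M A = (if {i, j} \<in> F then 1 else 0)"
  unfolding tables_filled_def
  using cell_index_less[where i = i and j = j and n = n]
    input_mem_forbidden[where i = i and j = j and n = n]
  by auto

lemma tables_filled_S:
  "tables_filled a0 bs bj M \<Longrightarrow> i < n \<Longrightarrow> j < n \<Longrightarrow> A = 3 + 3 * (n * n) + i * n + j \<Longrightarrow>
    M A = S_table a0 bs i j"
  unfolding tables_filled_def by auto

lemma tables_filled_J:
  "tables_filled a0 bs bj M \<Longrightarrow> i < n \<Longrightarrow> j < n \<Longrightarrow> A = 3 + 2 * (n * n) + i * n + j \<Longrightarrow>
    M A = J_table a0 bj i j"
  unfolding tables_filled_def by auto

lemma tables_filled_store_S:
  assumes "tables_filled a0 b bj M" "a0 < n" "b < n" "A = 3 + 3 * (n * n) + a0 * n + b"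
    "v = (if safe_path_exists E F a0 b then 1 else 0)"
  shows "tables_filled a0 (Suc b) bj (M(A := v))"
  unfolding tables_filled_def
proof (intro conjI allI impI)
  fix x assume "x < 3 + 2 * (n * n)" then show "(M(A := v)) x = input_mem n E F s t x"
    using assms(1,4) unfolding tables_filled_def by auto
next
  fix i j assume ij: "i < n" "j < n"
  have addr: "3 + 3 * (n * n) + i * n + j = A \<longleftrightarrow> i = a0 \<and> j = b"
    using cell_index_eq_iff[where j = j and j' = b and i = i and i' = a0 and n = n] ij assms by auto
  show "(M(A := v)) (3 + 3 * (n * n) + i * n + j) = S_table a0 (Suc b) i j"
    using assms(1,5) ij addr unfolding tables_filled_def S_table_def by (auto simp: less_Suc_eq)
next
  fix i j assume ij: "i < n" "j < n"
  have "i * n + j < n * n" using cell_index_less ij by auto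
  then have addr: "3 + 2 * (n * n) + i * n + j \<noteq> A" using assms(4) by auto
  show "(M(A := v)) (3 + 2 * (n * n) + i * n + j) = J_table a0 bj i j"
    using assms(1) ij addr unfolding tables_filled_def by auto
qed

lemma tables_filled_store_J:
  assumes "tables_filled a0 bs b M" "a0 < n" "b < n" "A = 3 + 2 * (n * n) + a0 * n + b"
    "v = (if jump_into E F a0 b then 1 else 0)" "a0 < b"
  shows "tables_filled a0 bs (Suc b) (M(A := v))"
  unfolding tables_filled_def
proof (intro conjI allI impI)
  fix x assume "x < 3 + 2 * (n * n)" then show "(M(A := v)) x = input_mem n E F s t x"
    using assms(1,4) unfolding tables_filled_def by auto
next
  fix i j assume ij: "i < n" "j < n"
  have "i * n + j < n * n" "a0 * n + b < n * n" using cell_index_less ij assms(2,3) by auto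
  then have addr: "3 + 3 * (n * n) + i * n + j \<noteq> A" using assms(4) by auto
  show "(M(A := v)) (3 + 3 * (n * n) + i * n + j) = S_table a0 bs i j"
    using assms(1) ij addr unfolding tables_filled_def by auto
next
  fix i j assume ij: "i < n" "j < n"
  have addr: "3 + 2 * (n * n) + i * n + j = A \<longleftrightarrow> i = a0 \<and> j = b"
    using cell_index_eq_iff[where j = j and j' = b and i = i and i' = a0 and n = n] ij assms by auto
  show "(M(A := v)) (3 + 2 * (n * n) + i * n + j) = J_table a0 (Suc b) i j"
    using assms(1,5,6) ij addr unfolding tables_filled_def J_table_def by (auto simp: less_Suc_eq)
qed

lemma tables_filled_new_row:
  assumes "tables_filled (Suc a) n n M" "a < n" "A = 3 + 3 * (n * n) + a * n + a" "v = 1"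
  shows "tables_filled a (Suc a) (Suc a) (M(A := v))"
  unfolding tables_filled_def
proof (intro conjI allI impI)
  fix x assume "x < 3 + 2 * (n * n)" then show "(M(A := v)) x = input_mem n E F s t x"
    using assms(1,3) unfolding tables_filled_def by auto
next
  fix i j assume ij: "i < n" "j < n"
  have addr: "3 + 3 * (n * n) + i * n + j = A \<longleftrightarrow> i = a \<and> j = a"
    using cell_index_eq_iff[where j = j and j' = a and i = i and i' = a and n = n] ij assms by auto
  have "S_table a (Suc a) i j = (if i = a \<and> j = a then 1 else S_table (Suc a) n i j)"
    unfolding S_table_def using ij
    by (auto simp: less_Suc_eq safe_path_exists_refl dest: safe_path_exists_le)
  then show "(M(A := v)) (3 + 3 * (n * n) + i * n + j) = S_table a (Suc a) i j"
    using assms(1,4) ij addr unfolding tables_filled_def by auto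
next
  fix i j assume ij: "i < n" "j < n"
  have "i * n + j < n * n" using cell_index_less ij by auto
  then have addr: "3 + 2 * (n * n) + i * n + j \<noteq> A" using assms(3) by auto
  have "J_table a (Suc a) i j = J_table (Suc a) n i j"
    unfolding J_table_def using ij by (auto simp: less_Suc_eq)
  then show "(M(A := v)) (3 + 2 * (n * n) + i * n + j) = J_table a (Suc a) i j"
    using assms(1) ij addr unfolding tables_filled_def by auto
qed

lemma tables_filled_init: "tables_filled n n n (input_mem n E F s t)"
  unfolding tables_filled_def
proof (intro conjI allI impI)
  fix i j assume "i < n" "j < n"
  then show "input_mem n E F s t (3 + 3 * (n * n) + i * n + j) = S_table n n i j"
    using input_mem_beyond[where x = "3 + 3 * (n * n) + i * n + j" and n = n]
    unfolding S_table_def by simp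
next
  fix i j assume "i < n" "j < n"
  then show "input_mem n E F s t (3 + 2 * (n * n) + i * n + j) = J_table n n i j"
    using input_mem_beyond[where x = "3 + 2 * (n * n) + i * n + j" and n = n]
    unfolding J_table_def by simp
qed simp

end

text \<open>Registers \<open>r_erow\<close>, \<open>r_srow\<close> and \<open>r_jrow\<close> hold the addresses of row \<open>a\<close> of the
  adjacency matrix, of the table of \<open>safe_path_exists\<close> and of the table of \<open>jump_into\<close>;
  \<open>r_srow_b\<close> holds that of row \<open>b\<close> of the former. \<open>r_partner\<close> holds
  \<open>last_partner F a (b - 1)\<close>, and \<open>r_count\<close>, \<open>r_bcount\<close>, \<open>r_acount\<close> and \<open>r_mcount\<close> count
  down the iterations of the loops.\<close>

abbreviation (input) r_res :: nat where "r_res \<equiv> 0"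
abbreviation (input) r_n :: nat where "r_n \<equiv> 1"
abbreviation (input) r_one :: nat where "r_one \<equiv> 2"
abbreviation (input) r_nn :: nat where "r_nn \<equiv> 3"
abbreviation (input) r_jbase :: nat where "r_jbase \<equiv> 4"
abbreviation (input) r_sbase :: nat where "r_sbase \<equiv> 5"
abbreviation (input) r_a :: nat where "r_a \<equiv> 6"
abbreviation (input) r_erow :: nat where "r_erow \<equiv> 7"
abbreviation (input) r_srow :: nat where "r_srow \<equiv> 8"
abbreviation (input) r_jrow :: nat where "r_jrow \<equiv> 9"
abbreviation (input) r_b :: nat where "r_b \<equiv> 10"
abbreviation (input) r_partner :: nat where "r_partner \<equiv> 11"
abbreviation (input) r_bcount :: nat where "r_bcount \<equiv> 12"
abbreviation (input) r_idx :: nat where "r_idx \<equiv> 13"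
abbreviation (input) r_acc :: nat where "r_acc \<equiv> 14"
abbreviation (input) r_ptr :: nat where "r_ptr \<equiv> 15"
abbreviation (input) r_ptr2 :: nat where "r_ptr2 \<equiv> 16"
abbreviation (input) r_tmp :: nat where "r_tmp \<equiv> 17"
abbreviation (input) r_tmp2 :: nat where "r_tmp2 \<equiv> 18"
abbreviation (input) r_bound :: nat where "r_bound \<equiv> 19"
abbreviation (input) r_acount :: nat where "r_acount \<equiv> 20"
abbreviation (input) r_count :: nat where "r_count \<equiv> 21"
abbreviation (input) r_srow_b :: nat where "r_srow_b \<equiv> 22"
abbreviation (input) r_mcount :: nat where "r_mcount \<equiv> 23"
abbreviation (input) r_s :: nat where "r_s \<equiv> 24"
abbreviation (input) r_t :: nat where "r_t \<equiv> 25"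

abbreviation unchanged_outside :: "nat set \<Rightarrow> (nat \<Rightarrow> nat) \<Rightarrow> (nat \<Rightarrow> nat) \<Rightarrow> bool" where
  "unchanged_outside X R R' \<equiv> \<forall>r. r \<notin> X \<longrightarrow> R' r = R r"

abbreviation (input) scan_regs :: "nat set" where
  "scan_regs \<equiv> {r_idx, r_acc, r_ptr, r_ptr2, r_tmp, r_tmp2, r_count}"

abbreviation (input) jump_entry_regs :: "nat set" where
  "jump_entry_regs \<equiv> {r_partner, r_idx, r_acc, r_ptr, r_ptr2, r_tmp, r_tmp2, r_bound, r_count}"

abbreviation (input) split_entry_regs :: "nat set" where
  "split_entry_regs \<equiv>
    {r_b, r_bcount, r_idx, r_acc, r_ptr, r_ptr2, r_tmp, r_tmp2, r_bound, r_count, r_srow_b}"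

abbreviation (input) column_regs :: "nat set" where
  "column_regs \<equiv>
    {r_b, r_partner, r_bcount, r_idx, r_acc, r_ptr, r_ptr2, r_tmp, r_tmp2, r_bound, r_count,
     r_srow_b}"

text \<open>Bits are combined by truncated subtraction: \<open>x + y - 1\<close> is the conjunction of the bits
  \<open>x\<close> and \<open>y\<close>, and \<open>1 - (1 - acc)\<close> turns a sum of bits into their disjunction.\<close>

definition jump_scan :: com where
  "jump_scan = Block [Load r_tmp r_ptr, Load r_tmp2 r_ptr2, Add r_tmp r_tmp r_tmp2,
    Sub r_tmp r_tmp r_one, Add r_acc r_acc r_tmp, Add r_idx r_idx r_one, Add r_ptr r_ptr r_one,
    Add r_ptr2 r_ptr2 r_n, Sub r_count r_bound r_idx]"

definition split_scan :: com where
  "split_scan = Block [Load r_tmp r_ptr, Load r_tmp2 r_ptr2, Add r_tmp r_tmp r_tmp2,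
    Sub r_tmp r_tmp r_one, Add r_acc r_acc r_tmp, Sub r_idx r_idx r_one, Sub r_ptr r_ptr r_one,
    Sub r_ptr2 r_ptr2 r_n, Add r_tmp r_idx r_one, Sub r_count r_tmp r_bound]"

definition jump_entry :: com where
  "jump_entry =
    Seq (Cond r_partner (Block [Sub r_bound r_partner r_one]) (Block [Add r_bound r_a r_one]))
   (Seq (Block [LoadConst r_acc 0, Add r_idx r_a r_zero, Add r_ptr r_srow r_a,
                Add r_ptr2 r_erow r_b, Sub r_count r_bound r_idx])
   (Seq (While r_count jump_scan)
   (Seq (Block [Sub r_tmp r_one r_acc, Sub r_tmp r_one r_tmp, Add r_ptr r_jrow r_b,
                Store r_ptr r_tmp, Add r_ptr r_erow r_nn, Add r_ptr r_ptr r_b, Load r_tmp r_ptr])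
        (Cond r_tmp (Block [Add r_partner r_b r_one]) (Block [])))))"

definition split_entry :: com where
  "split_entry =
    Seq (Cond r_partner (Block [Add r_bound r_partner r_zero]) (Block [Add r_bound r_a r_one]))
   (Seq (Block [LoadConst r_acc 0, Add r_idx r_b r_zero, Add r_ptr r_jrow r_b,
                Add r_ptr2 r_srow_b r_b, Add r_tmp r_idx r_one, Sub r_count r_tmp r_bound])
   (Seq (While r_count split_scan)
        (Block [Sub r_tmp r_one r_acc, Sub r_tmp r_one r_tmp, Add r_ptr r_srow r_b,
                Store r_ptr r_tmp, Add r_b r_b r_one, Add r_srow_b r_srow_b r_n,
                Sub r_bcount r_n r_b])))"

definition column_step :: com where
  "column_step = Seq jump_entry split_entry"

definition row_step :: com where
  "row_step =
    Seq (Block [Sub r_a r_acount r_one, Sub r_erow r_erow r_n, Sub r_srow r_srow r_n,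
                Sub r_jrow r_jrow r_n, Add r_ptr r_srow r_a, Store r_ptr r_one,
                LoadConst r_partner 0, Add r_b r_a r_one, Add r_srow_b r_srow r_n,
                Sub r_bcount r_n r_b])
   (Seq (While r_bcount column_step) (Block [Sub r_acount r_acount r_one]))"

definition add_n_times :: "nat \<Rightarrow> com" where
  "add_n_times r = While r_mcount (Block [Add r r r_n, Sub r_mcount r_mcount r_one])"

definition prelude :: com where
  "prelude =
    Seq (Block [Load r_n r_zero, LoadConst r_one 1, LoadConst r_nn 0, Add r_mcount r_n r_zero])
   (Seq (add_n_times r_nn)
        (Block [LoadConst r_tmp 3, Add r_jbase r_tmp r_nn, Add r_jbase r_jbase r_nn,
                Add r_sbase r_jbase r_nn, Add r_acount r_n r_zero, Add r_erow r_tmp r_nn,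
                Add r_srow r_sbase r_nn, Add r_jrow r_jbase r_nn]))"

definition lookup :: com where
  "lookup =
    Seq (Block [LoadConst r_tmp 1, Load r_s r_tmp, LoadConst r_tmp 2, Load r_t r_tmp,
                Add r_ptr r_sbase r_zero, Add r_mcount r_s r_zero])
   (Seq (add_n_times r_ptr) (Block [Add r_ptr r_ptr r_t, Load r_res r_ptr]))"

definition pafp_com :: com where
  "pafp_com = Seq prelude (Seq (While r_acount row_step) lookup)"

lemma wf_pafp_com: "wf_com pafp_com"
  by (simp add: pafp_com_def prelude_def lookup_def add_n_times_def row_step_def column_step_def
      jump_entry_def split_entry_def jump_scan_def split_scan_def)

lemma add_n_times_correct:
  assumes "R r_one = 1" "r \<notin> {r_n, r_one, r_mcount}"
  shows "terminates (R, M) (add_n_times r)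
    (\<lambda>s. s = (R(r := R r + R r_mcount * R r_n, r_mcount := 0), M)) (R r_mcount * 4 + 1)"
proof -
  define I where "I k s \<longleftrightarrow> s = (R(r := R r + k * R r_n, r_mcount := R r_mcount - k), M)" for k s
  have "terminates (R, M) (add_n_times r) (I (R r_mcount)) (R r_mcount * (2 + 2) + 1)"
    unfolding add_n_times_def
  proof (rule terminates_While)
    fix k s assume "I k s" "k < R r_mcount"
    with assms show "fst s r_mcount \<noteq> 0 \<and>
        terminates s (Block [Add r r r_n, Sub r_mcount r_mcount r_one]) (I (Suc k)) 2"
      unfolding I_def by (auto intro!: terminates_Block simp: fun_eq_iff)
  qed (auto simp: I_def fun_eq_iff)
  then show ?thesis by (rule terminates_mono) (auto simp: I_def)
qed

section \<open>Verification of the program\<close>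

context pafp_instance
begin

lemma jump_scan_correct:
  assumes tables_filled: "tables_filled a b b M" and x: "a \<le> x" "x < b" "b < n"
    and R: "R r_n = n" "R r_one = 1" "R r_idx = x" "R r_ptr = 3 + 3 * (n * n) + a * n + x"
      "R r_ptr2 = 3 + x * n + b"
  shows "terminates (R, M) jump_scan
    (\<lambda>(R', M'). M' = M \<and> unchanged_outside scan_regs R R' \<and>
      R' r_idx = Suc x \<and> R' r_ptr = Suc (R r_ptr) \<and> R' r_ptr2 = R r_ptr2 + n \<and>
      R' r_count = R r_bound - Suc x \<and>
      (R' r_acc \<noteq> 0 \<longleftrightarrow> R r_acc \<noteq> 0 \<or> safe_path_exists E F a x \<and> (x, b) \<in> E)) 9"
proof -
  have "M (R r_ptr) = (if safe_path_exists E F a x then 1 else 0)"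
    using tables_filled_S[OF tables_filled, of a x] R x unfolding S_table_def by auto
  moreover have "M (R r_ptr2) = (if (x, b) \<in> E then 1 else 0)"
    using tables_filled_edge[OF tables_filled, of x b] R x by auto
  ultimately show ?thesis
    unfolding jump_scan_def using R by (intro terminates_Block) auto
qed

lemma jump_scan_loop:
  assumes tables_filled: "tables_filled a b b M" and ab: "a < b" "b < n" "a < hi" "hi \<le> b"
    and R: "R r_n = n" "R r_one = 1" "R r_bound = hi" "R r_idx = a" "R r_acc = 0"
      "R r_ptr = 3 + 3 * (n * n) + a * n + a" "R r_ptr2 = 3 + a * n + b" "R r_count = hi - a"
  shows "terminates (R, M) (While r_count jump_scan)
    (\<lambda>(R', M'). M' = M \<and> unchanged_outside scan_regs R R' \<and>
      (R' r_acc \<noteq> 0 \<longleftrightarrow> (\<exists>x. a \<le> x \<and> x < hi \<and> safe_path_exists E F a x \<and> (x, b) \<in> E)))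
    ((hi - a) * 11 + 1)"
proof -
  define I where "I k = (\<lambda>(R', M'). M' = M \<and>
    unchanged_outside scan_regs R R' \<and>
    R' r_idx = a + k \<and> R' r_ptr = 3 + 3 * (n * n) + a * n + (a + k) \<and>
    R' r_ptr2 = 3 + (a + k) * n + b \<and> R' r_count = hi - (a + k) \<and>
    (R' r_acc \<noteq> 0 \<longleftrightarrow> (\<exists>x. a \<le> x \<and> x < a + k \<and> safe_path_exists E F a x \<and> (x, b) \<in> E)))"
    for k
  have "fst s r_count \<noteq> 0 \<and> terminates s jump_scan (I (Suc k)) 9" if "I k s" "k < hi - a" for k s
  proof -
    obtain R' where s: "s = (R', M)" using \<open>I k s\<close> unfolding I_def by (cases s) auto
    have regs: "R' r_n = n" "R' r_one = 1" "R' r_bound = hi" "R' r_idx = a + k"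
      "R' r_ptr = 3 + 3 * (n * n) + a * n + (a + k)" "R' r_ptr2 = 3 + (a + k) * n + b"
      using \<open>I k s\<close> s R unfolding I_def by auto
    have extend: "(\<exists>x. a \<le> x \<and> x < a + Suc k \<and> safe_path_exists E F a x \<and> (x, b) \<in> E) \<longleftrightarrow>
        (\<exists>x. a \<le> x \<and> x < a + k \<and> safe_path_exists E F a x \<and> (x, b) \<in> E) \<or>
        safe_path_exists E F a (a + k) \<and> (a + k, b) \<in> E"
      by (auto simp: less_Suc_eq) (metis le_add1)
    have x: "a \<le> a + k" "a + k < b" using that ab by simp_all
    have "terminates (R', M) jump_scan (I (Suc k)) 9"
      by (rule terminates_mono[OF jump_scan_correct[OF tables_filled x ab(2) regs(1,2,4-6)]])
        (use \<open>I k s\<close> s regs extend in \<open>auto simp: I_def\<close>)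
    then show ?thesis using \<open>I k s\<close> s that unfolding I_def by auto
  qed
  moreover have "fst s r_count = 0" if "I (hi - a) s" for s
    using that ab unfolding I_def by auto
  moreover have "I 0 (R, M)" unfolding I_def using R by auto
  ultimately have "terminates (R, M) (While r_count jump_scan) (I (hi - a))
      ((hi - a) * (9 + 2) + 1)"
    by (rule terminates_While)
  then show ?thesis
    by (rule terminates_mono) (use ab in \<open>auto simp: I_def\<close>)
qed

lemma split_scan_correct:
  assumes tables_filled: "tables_filled a b (Suc b) M" and y: "a < Suc y" "Suc y \<le> b" "b < n"
    and R: "R r_n = n" "R r_one = 1" "R r_idx = Suc y" "R r_ptr = 3 + 2 * (n * n) + a * n + Suc y"
      "R r_ptr2 = 3 + 3 * (n * n) + Suc y * n + b"
  shows "terminates (R, M) split_scan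
    (\<lambda>(R', M'). M' = M \<and> unchanged_outside scan_regs R R' \<and>
      R' r_idx = y \<and> R' r_ptr = 3 + 2 * (n * n) + a * n + y \<and>
      R' r_ptr2 = 3 + 3 * (n * n) + y * n + b \<and> R' r_count = Suc y - R r_bound \<and>
      (R' r_acc \<noteq> 0 \<longleftrightarrow>
        R r_acc \<noteq> 0 \<or> jump_into E F a (Suc y) \<and> safe_path_exists E F (Suc y) b)) 10"
proof -
  have "M (R r_ptr) = (if jump_into E F a (Suc y) then 1 else 0)"
    using tables_filled_J[OF tables_filled, of a "Suc y"] R y unfolding J_table_def by auto
  moreover have "M (R r_ptr2) = (if safe_path_exists E F (Suc y) b then 1 else 0)"
    using tables_filled_S[OF tables_filled, of "Suc y" b] R y unfolding S_table_def by auto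
  ultimately show ?thesis
    unfolding split_scan_def using R by (intro terminates_Block) auto
qed

lemma split_scan_loop:
  assumes tables_filled: "tables_filled a b (Suc b) M" and ab: "a < b" "b < n" "a < lw" "lw \<le> Suc b"
    and R: "R r_n = n" "R r_one = 1" "R r_bound = lw" "R r_idx = b" "R r_acc = 0"
      "R r_ptr = 3 + 2 * (n * n) + a * n + b" "R r_ptr2 = 3 + 3 * (n * n) + b * n + b"
      "R r_count = Suc b - lw"
  shows "terminates (R, M) (While r_count split_scan)
    (\<lambda>(R', M'). M' = M \<and> unchanged_outside scan_regs R R' \<and>
      (R' r_acc \<noteq> 0 \<longleftrightarrow>
        (\<exists>y. lw \<le> y \<and> y \<le> b \<and> a < y \<and> jump_into E F a y \<and> safe_path_exists E F y b)))
    ((Suc b - lw) * 12 + 1)"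
    (is "terminates _ _ ?post _")
proof -
  define I where "I k = (\<lambda>(R', M'). M' = M \<and>
    unchanged_outside scan_regs R R' \<and>
    R' r_idx = b - k \<and> R' r_ptr = 3 + 2 * (n * n) + a * n + (b - k) \<and>
    R' r_ptr2 = 3 + 3 * (n * n) + (b - k) * n + b \<and> R' r_count = Suc (b - k) - lw \<and>
    (R' r_acc \<noteq> 0 \<longleftrightarrow>
      (\<exists>y. b - k < y \<and> y \<le> b \<and> a < y \<and> jump_into E F a y \<and> safe_path_exists E F y b)))"
    for k
  have "fst s r_count \<noteq> 0 \<and> terminates s split_scan (I (Suc k)) 10"
    if "I k s" "k < Suc b - lw" for k s
  proof -
    obtain R' where s: "s = (R', M)" using \<open>I k s\<close> unfolding I_def by (cases s) auto
    define y where "y = b - Suc k"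
    have yk: "b - k = Suc y" and y: "a < Suc y" "Suc y \<le> b" using that ab by (auto simp: y_def)
    have regs: "R' r_n = n" "R' r_one = 1" "R' r_bound = lw" "R' r_idx = Suc y"
      "R' r_ptr = 3 + 2 * (n * n) + a * n + Suc y" "R' r_ptr2 = 3 + 3 * (n * n) + Suc y * n + b"
      using \<open>I k s\<close> s R yk unfolding I_def by auto
    have "y < z \<longleftrightarrow> Suc y < z \<or> z = Suc y" for z by auto
    then have extend:
      "(\<exists>z. y < z \<and> z \<le> b \<and> a < z \<and> jump_into E F a z \<and> safe_path_exists E F z b) \<longleftrightarrow>
        (\<exists>z. Suc y < z \<and> z \<le> b \<and> a < z \<and> jump_into E F a z \<and> safe_path_exists E F z b) \<or>
        jump_into E F a (Suc y) \<and> safe_path_exists E F (Suc y) b"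
      using y by auto
    have "terminates (R', M) split_scan (I (Suc k)) 10"
      by (rule terminates_mono[OF split_scan_correct[OF tables_filled y ab(2) regs(1,2,4-6)]])
        (use \<open>I k s\<close> s regs extend yk y_def in \<open>auto simp: I_def\<close>)
    then show ?thesis using \<open>I k s\<close> s that unfolding I_def by auto
  qed
  moreover have "fst s r_count = 0" if "I (Suc b - lw) s" for s
    using that ab unfolding I_def by auto
  moreover have "I 0 (R, M)" unfolding I_def using R by auto
  ultimately have "terminates (R, M) (While r_count split_scan) (I (Suc b - lw))
      ((Suc b - lw) * (10 + 2) + 1)"
    by (rule terminates_While)
  then show ?thesis
  proof (rule terminates_mono)
    have "b - (Suc b - lw) < y \<longleftrightarrow> lw \<le> y" for y using ab by auto
    then show "?post s" if "I (Suc b - lw) s" for s using that unfolding I_def by auto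
  qed simp
qed

lemma jump_entry_correct:
  assumes tables_filled: "tables_filled a b b M" and ab: "a < b" "b < n"
    and R: "R r_n = n" "R r_one = 1" "R r_nn = n * n" "R r_a = a" "R r_erow = 3 + a * n"
      "R r_srow = 3 + 3 * (n * n) + a * n" "R r_jrow = 3 + 2 * (n * n) + a * n" "R r_b = b"
      "R r_partner = last_partner F a (b - 1)" "R r_zero = 0"
  shows "terminates (R, M) jump_entry
    (\<lambda>(R', M'). unchanged_outside jump_entry_regs R R' \<and> R' r_partner = last_partner F a b \<and>
      tables_filled a b (Suc b) M')
    (11 * n + 19)"
    (is "terminates _ _ ?post _")
proof -
  define hi where "hi = jump_source_bound F a (b - 1)"
  have hi: "a < hi" "hi \<le> b" using jump_source_bound_bounds[OF ab(1)] unfolding hi_def by auto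
  define R1 where "R1 = R(r_bound := hi)"
  have set_bound: "terminates (R, M)
      (Cond r_partner (Block [Sub r_bound r_partner r_one]) (Block [Add r_bound r_a r_one]))
      (\<lambda>s. s = (R1, M)) (1 + 2)"
    by (rule terminates_Cond; rule terminates_Block)
      (auto simp: R1_def hi_def jump_source_bound_def R)
  define R2 where "R2 = R1(r_acc := 0, r_idx := a, r_ptr := 3 + 3 * (n * n) + a * n + a,
    r_ptr2 := 3 + a * n + b, r_count := hi - a)"
  have init_scan: "terminates (R1, M) (Block [LoadConst r_acc 0, Add r_idx r_a r_zero,
      Add r_ptr r_srow r_a, Add r_ptr2 r_erow r_b, Sub r_count r_bound r_idx]) (\<lambda>s. s = (R2, M)) 5"
    by (rule terminates_Block) (auto simp: R2_def R1_def R fun_eq_iff)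
  let ?scanned = "\<lambda>(R', M'). M' = M \<and>
    unchanged_outside scan_regs R2 R' \<and>
    (R' r_acc \<noteq> 0 \<longleftrightarrow> (\<exists>x. a \<le> x \<and> x < hi \<and> safe_path_exists E F a x \<and> (x, b) \<in> E))"
  have scan: "terminates (R2, M) (While r_count jump_scan) ?scanned ((hi - a) * 11 + 1)"
    by (rule jump_scan_loop[OF tables_filled ab hi])
      (auto simp: R2_def R1_def R R(1)[unfolded One_nat_def])
  have finish: "terminates s3 (Seq (Block [Sub r_tmp r_one r_acc, Sub r_tmp r_one r_tmp,
        Add r_ptr r_jrow r_b, Store r_ptr r_tmp, Add r_ptr r_erow r_nn, Add r_ptr r_ptr r_b,
        Load r_tmp r_ptr])
      (Cond r_tmp (Block [Add r_partner r_b r_one]) (Block []))) ?post (7 + (1 + 2))"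
    if "?scanned s3" for s3
  proof -
    obtain R3 where s3: "s3 = (R3, M)" using \<open>?scanned s3\<close> by (cases s3) auto
    have frame: "R3 r = R r"
      if "r \<notin> {r_idx, r_acc, r_ptr, r_ptr2, r_tmp, r_tmp2, r_bound, r_count}" for r
      using \<open>?scanned s3\<close> s3 that unfolding R2_def R1_def by auto
    have acc: "R3 r_acc \<noteq> 0 \<longleftrightarrow> jump_into E F a b"
      using \<open>?scanned s3\<close> s3 unfolding jump_into_def hi_def by auto
    define vJ where "vJ = (if jump_into E F a b then 1 else 0 :: nat)"
    define M4 where "M4 = M(3 + 2 * (n * n) + a * n + b := vJ)"
    have filled: "tables_filled a b (Suc b) M4"
      unfolding M4_def using tables_filled_store_J[OF tables_filled _ ab(2) refl vJ_def ab(1)] ab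
      by auto
    define fb where "fb = (if {a, b} \<in> F then 1 else 0 :: nat)"
    have "M4 (3 + a * n + n * n + b) = fb"
      using tables_filled_forbidden[OF filled, of a b "3 + a * n + n * n + b"] ab
      unfolding fb_def by auto
    then have "exec_instrs [Sub r_tmp r_one r_acc, Sub r_tmp r_one r_tmp, Add r_ptr r_jrow r_b,
        Store r_ptr r_tmp, Add r_ptr r_erow r_nn, Add r_ptr r_ptr r_b, Load r_tmp r_ptr] (R3, M)
      = (R3(r_tmp := fb, r_ptr := 3 + a * n + n * n + b), M4)"
      using acc frame[of r_one] frame[of r_jrow] frame[of r_b] frame[of r_erow] frame[of r_nn] R
      unfolding M4_def vJ_def by (auto simp: fun_eq_iff)
    moreover have "last_partner F a b = (if {a, b} \<in> F then Suc b else last_partner F a (b - 1))"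
      using last_partner_pred[of b F a] ab by auto
    then have "terminates (R3(r_tmp := fb, r_ptr := 3 + a * n + n * n + b), M4)
        (Cond r_tmp (Block [Add r_partner r_b r_one]) (Block [])) ?post (1 + 2)"
      using filled frame R by (intro terminates_Cond terminates_Block) (auto simp: fb_def)
    ultimately show ?thesis
      unfolding s3 by (intro terminates_Seq_to[OF terminates_Block]) auto
  qed
  have "terminates (R, M) jump_entry ?post ((1 + 2) + (5 + (((hi - a) * 11 + 1) + (7 + (1 + 2)))))"
    unfolding jump_entry_def
    by (rule terminates_Seq_to[OF set_bound] terminates_Seq_to[OF init_scan] terminates_Seq[OF scan] finish)+
  then show ?thesis by (rule terminates_mono) (use hi ab in auto)
qed

lemma split_entry_correct:
  assumes tables_filled: "tables_filled a b (Suc b) M" and ab: "a < b" "b < n"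
    and R: "R r_n = n" "R r_one = 1" "R r_a = a" "R r_srow = 3 + 3 * (n * n) + a * n"
      "R r_jrow = 3 + 2 * (n * n) + a * n" "R r_b = b" "R r_partner = last_partner F a b"
      "R r_srow_b = 3 + 3 * (n * n) + b * n" "R r_zero = 0"
  shows "terminates (R, M) split_entry
    (\<lambda>(R', M'). unchanged_outside split_entry_regs R R' \<and> R' r_b = Suc b \<and>
      R' r_bcount = n - Suc b \<and> R' r_srow_b = 3 + 3 * (n * n) + Suc b * n \<and>
      tables_filled a (Suc b) (Suc b) M')
    (12 * n + 17)"
    (is "terminates _ _ ?post _")
proof -
  define lw where "lw = jump_target_bound F a b"
  have lw: "a < lw" "lw \<le> Suc b" using jump_target_bound_bounds[OF ab(1)] unfolding lw_def by auto
  define R1 where "R1 = R(r_bound := lw)"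
  have set_bound: "terminates (R, M)
      (Cond r_partner (Block [Add r_bound r_partner r_zero]) (Block [Add r_bound r_a r_one]))
      (\<lambda>s. s = (R1, M)) (1 + 2)"
    by (rule terminates_Cond; rule terminates_Block)
      (auto simp: R1_def lw_def jump_target_bound_def R)
  define R2 where "R2 = R1(r_acc := 0, r_idx := b, r_ptr := 3 + 2 * (n * n) + a * n + b,
    r_ptr2 := 3 + 3 * (n * n) + b * n + b, r_tmp := Suc b, r_count := Suc b - lw)"
  have init_scan: "terminates (R1, M) (Block [LoadConst r_acc 0, Add r_idx r_b r_zero,
      Add r_ptr r_jrow r_b, Add r_ptr2 r_srow_b r_b, Add r_tmp r_idx r_one, Sub r_count r_tmp r_bound])
      (\<lambda>s. s = (R2, M)) 6"
    by (rule terminates_Block) (auto simp: R2_def R1_def R fun_eq_iff)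
  let ?scanned = "\<lambda>(R', M'). M' = M \<and>
    unchanged_outside scan_regs R2 R' \<and>
    (R' r_acc \<noteq> 0 \<longleftrightarrow>
      (\<exists>y. lw \<le> y \<and> y \<le> b \<and> a < y \<and> jump_into E F a y \<and> safe_path_exists E F y b))"
  have scan: "terminates (R2, M) (While r_count split_scan) ?scanned ((Suc b - lw) * 12 + 1)"
    by (rule split_scan_loop[OF tables_filled ab lw])
      (auto simp: R2_def R1_def R R(1)[unfolded One_nat_def])
  have finish: "terminates s3 (Block [Sub r_tmp r_one r_acc, Sub r_tmp r_one r_tmp,
      Add r_ptr r_srow r_b, Store r_ptr r_tmp, Add r_b r_b r_one, Add r_srow_b r_srow_b r_n,
      Sub r_bcount r_n r_b]) ?post 7"
    if "?scanned s3" for s3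
  proof -
    obtain R3 where s3: "s3 = (R3, M)" using \<open>?scanned s3\<close> by (cases s3) auto
    have frame: "R3 r = R r" if "r \<notin> split_entry_regs" for r
      using \<open>?scanned s3\<close> s3 that unfolding R2_def R1_def by auto
    have regs: "R3 r_n = n" "R3 r_one = 1" "R3 r_srow = 3 + 3 * (n * n) + a * n" "R3 r_b = b"
      "R3 r_srow_b = 3 + 3 * (n * n) + b * n"
      using \<open>?scanned s3\<close> s3 R unfolding R2_def R1_def by auto
    have "R3 r_acc \<noteq> 0 \<longleftrightarrow>
        (\<exists>y. lw \<le> y \<and> y \<le> b \<and> a < y \<and> jump_into E F a y \<and> safe_path_exists E F y b)"
      using \<open>?scanned s3\<close> s3 by auto
    also have "\<dots> \<longleftrightarrow> safe_path_exists E F a b"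
      unfolding lw_def safe_path_exists_iff_jump[OF ab(1)] using lw lw_def by auto
    finally have acc: "R3 r_acc \<noteq> 0 \<longleftrightarrow> safe_path_exists E F a b" .
    define vS where "vS = (if safe_path_exists E F a b then 1 else 0 :: nat)"
    have "tables_filled a (Suc b) (Suc b) (M(3 + 3 * (n * n) + a * n + b := vS))"
      using tables_filled_store_S[OF tables_filled _ ab(2) refl vS_def] ab by auto
    then show ?thesis
      unfolding s3 using frame regs acc by (intro terminates_Block) (auto simp: vS_def)
  qed
  have "terminates (R, M) split_entry ?post ((1 + 2) + (6 + (((Suc b - lw) * 12 + 1) + 7)))"
    unfolding split_entry_def
    by (rule terminates_Seq_to[OF set_bound] terminates_Seq_to[OF init_scan] terminates_Seq[OF scan] finish)+
  then show ?thesis by (rule terminates_mono) (use lw ab in auto)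
qed

lemma column_step_correct:
  assumes tables_filled: "tables_filled a b b M" and ab: "a < b" "b < n"
    and R: "R r_n = n" "R r_one = 1" "R r_nn = n * n" "R r_a = a" "R r_erow = 3 + a * n"
      "R r_srow = 3 + 3 * (n * n) + a * n" "R r_jrow = 3 + 2 * (n * n) + a * n" "R r_b = b"
      "R r_partner = last_partner F a (b - 1)" "R r_zero = 0"
      "R r_srow_b = 3 + 3 * (n * n) + b * n"
  shows "terminates (R, M) column_step
    (\<lambda>(R', M'). unchanged_outside column_regs R R' \<and>
      R' r_b = Suc b \<and> R' r_partner = last_partner F a b \<and> R' r_bcount = n - Suc b \<and>
      R' r_srow_b = 3 + 3 * (n * n) + Suc b * n \<and>
      tables_filled a (Suc b) (Suc b) M')
    (23 * n + 37)"
    (is "terminates _ _ ?post _")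
proof -
  let ?jumped = "\<lambda>(R', M'). unchanged_outside jump_entry_regs R R' \<and>
    R' r_partner = last_partner F a b \<and> tables_filled a b (Suc b) M'"
  have "terminates s1 split_entry ?post (12 * n + 17)" if "?jumped s1" for s1
  proof -
    obtain R1 M1 where s1: "s1 = (R1, M1)" by (cases s1)
    have frame: "R1 r = R r" if "r \<notin> jump_entry_regs" for r
      using \<open>?jumped s1\<close> s1 that by auto
    have "terminates (R1, M1) split_entry
      (\<lambda>(R', M'). unchanged_outside split_entry_regs R1 R' \<and> R' r_b = Suc b \<and>
        R' r_bcount = n - Suc b \<and> R' r_srow_b = 3 + 3 * (n * n) + Suc b * n \<and>
      tables_filled a (Suc b) (Suc b) M')
      (12 * n + 17)"
      using \<open>?jumped s1\<close> s1 R frame[of r_n] frame[of r_one] frame[of r_a] frame[of r_srow]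
        frame[of r_jrow] frame[of r_b] frame[of r_srow_b] frame[of r_zero]
      by (intro split_entry_correct[OF _ ab]) auto
    then show ?thesis
      unfolding s1 by (rule terminates_mono) (use \<open>?jumped s1\<close> s1 in \<open>auto simp: frame\<close>)
  qed
  with jump_entry_correct[OF tables_filled ab R(1-10)]
  have "terminates (R, M) column_step ?post ((11 * n + 19) + (12 * n + 17))"
    unfolding column_step_def by (rule terminates_Seq)
  then show ?thesis by (rule terminates_mono) simp_all
qed

lemma column_loop_correct:
  assumes tables_filled: "tables_filled a (Suc a) (Suc a) M" and an: "a < n"
    and R: "R r_n = n" "R r_one = 1" "R r_nn = n * n" "R r_a = a" "R r_erow = 3 + a * n"
      "R r_srow = 3 + 3 * (n * n) + a * n" "R r_jrow = 3 + 2 * (n * n) + a * n" "R r_b = Suc a"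
      "R r_partner = 0" "R r_bcount = n - Suc a" "R r_srow_b = 3 + 3 * (n * n) + Suc a * n"
      "R r_zero = 0"
  shows "terminates (R, M) (While r_bcount column_step)
    (\<lambda>(R', M'). unchanged_outside column_regs R R' \<and> tables_filled a n n M')
    (n * ((23 * n + 37) + 2) + 1)"
proof -
  define I where "I k = (\<lambda>(R', M'). unchanged_outside column_regs R R' \<and>
    R' r_b = Suc a + k \<and> R' r_partner = last_partner F a (a + k) \<and> R' r_bcount = n - (Suc a + k) \<and>
    R' r_srow_b = 3 + 3 * (n * n) + (Suc a + k) * n \<and> tables_filled a (Suc a + k) (Suc a + k) M')"
    for k
  have "fst s r_bcount \<noteq> 0 \<and> terminates s column_step (I (Suc k)) (23 * n + 37)"
    if "I k s" "k < n - Suc a" for k s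
  proof -
    obtain R' M' where s: "s = (R', M')" by (cases s)
    have I: "unchanged_outside column_regs R R'"
      "R' r_b = Suc a + k" "R' r_partner = last_partner F a (Suc a + k - 1)"
      "R' r_bcount = n - (Suc a + k)" "R' r_srow_b = 3 + 3 * (n * n) + (Suc a + k) * n"
      "tables_filled a (Suc a + k) (Suc a + k) M'"
      using that s unfolding I_def by auto
    have b: "a < Suc a + k" "Suc a + k < n" using that by auto
    have regs: "R' r_n = n" "R' r_one = 1" "R' r_nn = n * n" "R' r_a = a" "R' r_erow = 3 + a * n"
      "R' r_srow = 3 + 3 * (n * n) + a * n" "R' r_jrow = 3 + 2 * (n * n) + a * n" "R' r_zero = 0"
      using I(1) R by auto
    have "terminates (R', M') column_step (I (Suc k)) (23 * n + 37)"
      by (rule terminates_mono[OF column_step_correct[OF I(6) b regs(1-7) I(2,3) regs(8) I(5)]])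
        (use I(1) in \<open>auto simp: I_def\<close>)
    then show ?thesis using s I b by simp
  qed
  moreover have "fst s r_bcount = 0" if "I (n - Suc a) s" for s
    using that an unfolding I_def by auto
  moreover have "I 0 (R, M)" unfolding I_def using R tables_filled last_partner_le[of a a F] by auto
  ultimately have "terminates (R, M) (While r_bcount column_step) (I (n - Suc a))
      ((n - Suc a) * ((23 * n + 37) + 2) + 1)"
    by (rule terminates_While)
  then show ?thesis
    by (rule terminates_mono) (use an in \<open>auto simp: I_def intro: mult_le_mono1\<close>)
qed

lemma row_step_correct:
  assumes tables_filled: "tables_filled (Suc a) n n M" and an: "a < n"
    and R: "R r_n = n" "R r_one = 1" "R r_nn = n * n" "R r_jbase = 3 + 2 * (n * n)"
      "R r_sbase = 3 + 3 * (n * n)" "R r_acount = Suc a" "R r_erow = 3 + Suc a * n"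
      "R r_srow = 3 + 3 * (n * n) + Suc a * n" "R r_jrow = 3 + 2 * (n * n) + Suc a * n"
      "R r_zero = 0"
  shows "terminates (R, M) row_step
    (\<lambda>(R', M'). R' r_n = n \<and> R' r_one = 1 \<and> R' r_nn = n * n \<and> R' r_jbase = 3 + 2 * (n * n) \<and>
      R' r_sbase = 3 + 3 * (n * n) \<and> R' r_acount = a \<and> R' r_erow = 3 + a * n \<and>
      R' r_srow = 3 + 3 * (n * n) + a * n \<and> R' r_jrow = 3 + 2 * (n * n) + a * n \<and> R' r_zero = 0 \<and>
      tables_filled a n n M')
    (10 + ((n * ((23 * n + 37) + 2) + 1) + 1))"
    (is "terminates _ _ ?post _")
proof -
  define R1 where "R1 = R(r_a := a, r_erow := 3 + a * n, r_srow := 3 + 3 * (n * n) + a * n,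
    r_jrow := 3 + 2 * (n * n) + a * n, r_ptr := 3 + 3 * (n * n) + a * n + a, r_partner := 0,
    r_b := Suc a, r_srow_b := 3 + 3 * (n * n) + Suc a * n, r_bcount := n - Suc a)"
  define M1 where "M1 = M(3 + 3 * (n * n) + a * n + a := 1)"
  have start: "terminates (R, M) (Block [Sub r_a r_acount r_one, Sub r_erow r_erow r_n,
      Sub r_srow r_srow r_n, Sub r_jrow r_jrow r_n, Add r_ptr r_srow r_a, Store r_ptr r_one,
      LoadConst r_partner 0, Add r_b r_a r_one, Add r_srow_b r_srow r_n, Sub r_bcount r_n r_b])
      (\<lambda>s'. s' = (R1, M1)) 10"
    unfolding R1_def M1_def using R
    by (intro terminates_Block) (auto simp: fun_eq_iff algebra_simps)
  have columns: "terminates (R1, M1) (While r_bcount column_step)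
    (\<lambda>(R', M'). unchanged_outside column_regs R1 R' \<and> tables_filled a n n M')
    (n * ((23 * n + 37) + 2) + 1)"
    using tables_filled_new_row[OF tables_filled an refl refl]
    by (intro column_loop_correct[OF _ an]) (auto simp: M1_def R1_def R R(1)[unfolded One_nat_def])
  have "terminates s (Block [Sub r_acount r_acount r_one]) ?post 1"
    if "(\<lambda>(R', M'). unchanged_outside column_regs R1 R' \<and> tables_filled a n n M') s" for s
    using that R by (cases s) (auto intro!: terminates_Block simp: R1_def)
  then show ?thesis
    unfolding row_step_def by (intro terminates_Seq_to[OF start] terminates_Seq[OF columns])
qed

lemma row_loop_correct:
  assumes tables_filled: "tables_filled n n n M"
    and R: "R r_n = n" "R r_one = 1" "R r_nn = n * n" "R r_jbase = 3 + 2 * (n * n)"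
      "R r_sbase = 3 + 3 * (n * n)" "R r_acount = n" "R r_erow = 3 + n * n"
      "R r_srow = 3 + 3 * (n * n) + n * n" "R r_jrow = 3 + 2 * (n * n) + n * n" "R r_zero = 0"
  shows "terminates (R, M) (While r_acount row_step)
    (\<lambda>(R', M'). R' r_n = n \<and> R' r_one = 1 \<and> R' r_sbase = 3 + 3 * (n * n) \<and> R' r_zero = 0 \<and>
      tables_filled 0 n n M')
    (n * ((10 + ((n * ((23 * n + 37) + 2) + 1) + 1)) + 2) + 1)"
proof -
  define I where "I k = (\<lambda>(R', M'). R' r_n = n \<and> R' r_one = 1 \<and> R' r_nn = n * n \<and>
    R' r_jbase = 3 + 2 * (n * n) \<and> R' r_sbase = 3 + 3 * (n * n) \<and> R' r_acount = n - k \<and>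
    R' r_erow = 3 + (n - k) * n \<and> R' r_srow = 3 + 3 * (n * n) + (n - k) * n \<and>
    R' r_jrow = 3 + 2 * (n * n) + (n - k) * n \<and> R' r_zero = 0 \<and> tables_filled (n - k) n n M')"
    for k
  have "fst s r_acount \<noteq> 0 \<and>
      terminates s row_step (I (Suc k)) (10 + ((n * ((23 * n + 37) + 2) + 1) + 1))"
    if "I k s" "k < n" for k s
  proof -
    obtain R' M' where s: "s = (R', M')" by (cases s)
    have nk: "n - k = Suc (n - Suc k)" "n - Suc k < n" using that by auto
    have I: "R' r_n = n" "R' r_one = 1" "R' r_nn = n * n" "R' r_jbase = 3 + 2 * (n * n)"
      "R' r_sbase = 3 + 3 * (n * n)" "R' r_acount = Suc (n - Suc k)"
      "R' r_erow = 3 + Suc (n - Suc k) * n" "R' r_srow = 3 + 3 * (n * n) + Suc (n - Suc k) * n"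
      "R' r_jrow = 3 + 2 * (n * n) + Suc (n - Suc k) * n" "R' r_zero = 0"
      "tables_filled (Suc (n - Suc k)) n n M'"
      using that s nk(1) unfolding I_def by auto
    have "terminates (R', M') row_step (I (Suc k)) (10 + ((n * ((23 * n + 37) + 2) + 1) + 1))"
      by (rule terminates_mono[OF row_step_correct[OF I(11) nk(2) I(1-10)]]) (auto simp: I_def)
    then show ?thesis using s I by simp
  qed
  moreover have "fst s r_acount = 0" if "I n s" for s
    using that unfolding I_def by auto
  moreover have "I 0 (R, M)" unfolding I_def using R tables_filled by auto
  ultimately have "terminates (R, M) (While r_acount row_step) (I n)
      (n * ((10 + ((n * ((23 * n + 37) + 2) + 1) + 1)) + 2) + 1)"
    by (rule terminates_While)
  then show ?thesis
    by (rule terminates_mono) (auto simp: I_def)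
qed

lemma prelude_correct:
  "terminates (\<lambda>_. 0, input_mem n E F s t) prelude
    (\<lambda>(R, M). M = input_mem n E F s t \<and> R r_n = n \<and> R r_one = 1 \<and> R r_nn = n * n \<and>
      R r_jbase = 3 + 2 * (n * n) \<and> R r_sbase = 3 + 3 * (n * n) \<and> R r_acount = n \<and>
      R r_erow = 3 + n * n \<and> R r_srow = 3 + 3 * (n * n) + n * n \<and>
      R r_jrow = 3 + 2 * (n * n) + n * n \<and> R r_zero = 0)
    (4 + ((n * 4 + 1) + 8))"
proof -
  let ?M0 = "input_mem n E F s t"
  define R1 where "R1 = (\<lambda>_::nat. 0 :: nat)(r_n := n, r_one := 1, r_nn := 0, r_mcount := n)"
  have init: "terminates (\<lambda>_. 0, ?M0) (Block [Load r_n r_zero, LoadConst r_one 1, LoadConst r_nn 0,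
      Add r_mcount r_n r_zero]) (\<lambda>s'. s' = (R1, ?M0)) 4"
    by (rule terminates_Block) (auto simp: R1_def input_mem_def fun_eq_iff)
  have square: "terminates (R1, ?M0) (add_n_times r_nn)
      (\<lambda>s'. s' = (R1(r_nn := n * n, r_mcount := 0), ?M0)) (n * 4 + 1)"
    using add_n_times_correct[of R1 r_nn ?M0] by (simp add: R1_def)
  show ?thesis
    unfolding prelude_def
    by (intro terminates_Seq_to[OF init] terminates_Seq_to[OF square] terminates_Block)
      (auto simp: R1_def)
qed

lemma lookup_correct:
  assumes "tables_filled 0 n n M" "R r_n = n" "R r_one = 1" "R r_sbase = 3 + 3 * (n * n)"
    "R r_zero = 0"
  shows "terminates (R, M) lookup
    (\<lambda>(R', M'). R' r_res = (if safe_path_exists E F s t then 1 else 0))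
    (6 + ((n * 4 + 1) + 2))"
proof -
  have st: "s < n" "t < n" using valid unfolding valid_instance_def by auto
  then have "M 1 = s" "M 2 = t"
    using assms(1) unfolding tables_filled_def by (auto simp: input_mem_def)
  define R1 where "R1 = R(r_tmp := 2, r_s := s, r_t := t, r_ptr := 3 + 3 * (n * n), r_mcount := s)"
  have read: "terminates (R, M) (Block [LoadConst r_tmp 1, Load r_s r_tmp, LoadConst r_tmp 2,
      Load r_t r_tmp, Add r_ptr r_sbase r_zero, Add r_mcount r_s r_zero]) (\<lambda>s'. s' = (R1, M)) 6"
    using assms \<open>M 1 = s\<close> \<open>M 2 = t\<close>
    by (intro terminates_Block) (auto simp: R1_def fun_eq_iff numeral_eq_Suc)
  have row: "terminates (R1, M) (add_n_times r_ptr)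
      (\<lambda>s'. s' = (R1(r_ptr := 3 + 3 * (n * n) + s * n, r_mcount := 0), M)) (s * 4 + 1)"
    using add_n_times_correct[of R1 r_ptr M] assms by (simp add: R1_def)
  have "M (3 + 3 * (n * n) + s * n + t) = (if safe_path_exists E F s t then 1 else 0)"
    using tables_filled_S[OF assms(1) st refl] st unfolding S_table_def by auto
  then have "terminates (R, M) lookup
      (\<lambda>(R', M'). R' r_res = (if safe_path_exists E F s t then 1 else 0)) (6 + ((s * 4 + 1) + 2))"
    unfolding lookup_def
    by (intro terminates_Seq_to[OF read] terminates_Seq_to[OF row] terminates_Block)
      (auto simp: R1_def)
  then show ?thesis by (rule terminates_mono) (use st in auto)
qed

lemma pafp_com_correct:
  "terminates (\<lambda>_. 0, input_mem n E F s t) pafp_com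
     (\<lambda>(R, M). R r_res = (if safe_path_exists E F s t then 1 else 0))
     (23 * n ^ 3 + 47 * n ^ 2 + 22 * n + 24)"
    (is "terminates _ _ ?result _")
proof -
  let ?T_rows = "n * ((10 + ((n * ((23 * n + 37) + 2) + 1) + 1)) + 2) + 1"
  have rows_then_lookup: "terminates (R, input_mem n E F s t) (Seq (While r_acount row_step) lookup)
      ?result (?T_rows + (6 + ((n * 4 + 1) + 2)))"
    if "R r_n = n" "R r_one = 1" "R r_nn = n * n" "R r_jbase = 3 + 2 * (n * n)"
      "R r_sbase = 3 + 3 * (n * n)" "R r_acount = n" "R r_erow = 3 + n * n"
      "R r_srow = 3 + 3 * (n * n) + n * n" "R r_jrow = 3 + 2 * (n * n) + n * n" "R r_zero = 0" for R
    by (rule terminates_Seq[OF row_loop_correct[OF tables_filled_init that]])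
      (simp only: split_paired_all prod.case, elim conjE, rule lookup_correct; assumption)
  have "terminates (\<lambda>_. 0, input_mem n E F s t) pafp_com ?result
      ((4 + ((n * 4 + 1) + 8)) + (?T_rows + (6 + ((n * 4 + 1) + 2))))"
    unfolding pafp_com_def
    by (rule terminates_Seq[OF prelude_correct])
      (simp only: split_paired_all prod.case, elim conjE, rule rows_then_lookup; assumption)
  then show ?thesis
    by (rule terminates_mono) (simp_all add: algebra_simps power2_eq_square power3_eq_cube)
qed

end

lemma cubic_le:
  fixes n :: nat
  assumes "0 < n"
  shows "23 * n ^ 3 + 47 * n ^ 2 + 22 * n + 24 \<le> 116 * n ^ 3"
proof -
  have "n ^ 2 \<le> n ^ 3" "n ^ 1 \<le> n ^ 3" "n ^ 0 \<le> n ^ 3"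
    using assms by (intro power_increasing; simp)+
  then show ?thesis by simp
qed

theorem mainTheorem1:
  shows "\<exists>(prog :: instr list) (C :: nat).
     \<forall>n E F s t. valid_instance n E F s t \<and> well_parenthesized F \<longrightarrow>
       (\<exists>k \<le> C * n ^ 3.
          halted prog (run prog k (init_config n E F s t)) \<and>
          reg (run prog k (init_config n E F s t)) 0 =
            (if safe_path_exists E F s t then 1 else 0))"
proof (rule exI[of _ "compile 0 pafp_com"], rule exI[of _ 116], intro allI impI)
  fix n E F s t
  assume "valid_instance n E F s t \<and> well_parenthesized F"
  then interpret pafp_instance n E F s t by unfold_locales auto
  let ?prog = "compile 0 pafp_com" and ?s0 = "(\<lambda>_. 0, input_mem n E F s t)"
  obtain k s' where big: "big_step pafp_com ?s0 k s'"
    and result: "fst s' r_res = (if safe_path_exists E F s t then 1 else 0)"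
    and time: "k \<le> 23 * n ^ 3 + 47 * n ^ 2 + 22 * n + 24"
    using pafp_com_correct unfolding terminates_def by (auto split: prod.splits)
  have "0 < n" using valid unfolding valid_instance_def by auto
  have "run ?prog k (config_of 0 ?s0) = config_of (com_length pafp_com) s'"
    using run_compile[OF big wf_pafp_com] by (simp add: code_at_def)
  moreover have "init_config n E F s t = config_of 0 ?s0"
    by (simp add: init_config_def config_of_def)
  moreover have "k \<le> 116 * n ^ 3" using time cubic_le[OF \<open>0 < n\<close>] by simp
  ultimately show "\<exists>k \<le> 116 * n ^ 3. halted ?prog (run ?prog k (init_config n E F s t)) \<and>
      reg (run ?prog k (init_config n E F s t)) 0 = (if safe_path_exists E F s t then 1 else 0)"
    using result by (intro exI[of _ k]) (auto simp: halted_def config_of_def)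
qed

end
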